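(* Let $n\ge1$, $T>0$, $\alpha\ge0$, $l>0$, $\Lambda\in\mathbb{R}^{n\times n}$ symmetric positive definite, $\Sigma$ symmetric nonnegative definite, $\theta_1,\dots,\theta_n\ge0$, and $f(\xi,x)=\xi^\top\Lambda\xi+\alpha x^\top\Sigma x$. Assume that the initial value problem $$C'=C^\top\Lambda^{-1}C+C^\top\tilde CC-\alpha\Sigma,\qquad C(T)=lI,\qquad \tilde C(l,t):=\operatorname{diag}\Big(\frac{\theta_i}{c_{i,i}(l,t)}\Big),$$ possesses a positive definite solution $C(l,t)=(c_{i,j}(l,t))_{i,j=1,\dots,n}$ on $[0,T]$. Then $w(l,t,x):=x^\top C(l,t)x$ satisfies $$\frac{\partial w}{\partial t}(t,x)=\sup_{(\xi,\eta)\in\mathbb{R}^n\times\mathbb{R}^n}\Big[\sum_{i=1}^n\theta_i\big(w(t,x)-w(t,x-\eta_i e_i)\big)+\nabla_x w(t,x)\,\xi-f(\xi,x)\Big],\qquad w(T,x)=l\,x^\top x,$$ with maximizer $u^*=(\xi^*,\eta^* )$ given by $$\xi^*(l,t,x)=\Lambda^{-1}C(l,t)x,\qquad \eta^*(l,t,x)=\bar C(l,t)C(l,t)x,\qquad \bar C(l,t):=\operatorname{diag}\Big(\frac{1}{c_{i,i}(l,t)}\Big).$$ If there exist $i_1,\dots,i_k\in\{1,\dots,n\}$ with $\theta_{i_j}=0$ ($j=1,\dots,k$), then $\eta_{i_j}$ can be chosen arbitrarily; up to arbitrary choices of these $\eta_{i_j}$, the maximizer is unique.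
   Context: $e_i$ denotes the $i$-th standard unit vector of $\mathbb{R}^n$, $\nabla_x w$ is the gradient (row vector) in $x$, and $w(t,x)$ abbreviates $w(l,t,x)$. *)

theory Defs
  imports "HOL-Analysis.Analysis"
begin

definition pos_def_mat :: "real^'n^'n \<Rightarrow> bool" where
  "pos_def_mat M \<longleftrightarrow> transpose M = M \<and> (\<forall>x. x \<noteq> 0 \<longrightarrow> x \<bullet> (M *v x) > 0)"

definition nonneg_def_mat :: "real^'n^'n \<Rightarrow> bool" where
  "nonneg_def_mat M \<longleftrightarrow> transpose M = M \<and> (\<forall>x. x \<bullet> (M *v x) \<ge> 0)"

definition diag_mat :: "('n \<Rightarrow> real) \<Rightarrow> real^'n^'n" where
  "diag_mat d = (\<chi> i j. if i = j then d i else 0)"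

end

theory Submission
  imports Defs
begin

text \<open>
  With \<open>y = C x\<close>, the Hamiltonian splits into a sum of scalar concave quadratics in the
  jump sizes \<open>\<eta>\<^sub>i\<close> (weighted by \<open>\<theta>\<^sub>i\<close>) plus a concave quadratic in \<open>\<xi>\<close>. Completing the
  square in each of them exhibits the maximizer and the maximal value
  \<open>\<Sum>\<^sub>i \<theta>\<^sub>i y\<^sub>i\<^sup>2 / c\<^sub>i\<^sub>i + y\<^sup>T \<Lambda>\<^sup>-\<^sup>1 y - \<alpha> x\<^sup>T \<Sigma> x\<close>, which is exactly \<open>x\<^sup>T C' x\<close> for the
  Riccati right-hand side. Uniqueness comes from strict positivity of \<open>\<Lambda>\<close> and of the
  diagonal entries \<open>c\<^sub>i\<^sub>i\<close>.
\<close>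

lemma matrix_vector_mult_axis_nth: "((M::real^'n^'m) *v axis i 1) $ k = M $ k $ i"
  by (simp add: matrix_vector_mult_def axis_def if_distrib[of "\<lambda>a. _ * a"] cong: if_cong)

lemma diag_mat_mult_vector_nth: "(diag_mat d *v v) $ i = d i * v $ i"
  by (simp add: diag_mat_def matrix_vector_mult_def if_distrib[of "\<lambda>a. a * _"] cong: if_cong)

lemma inner_transpose_matrix_vector: "x \<bullet> (transpose M *v v) = (M *v x) \<bullet> (v::real^'n)"
  by (metis dot_lmul_matrix inner_commute transpose_matrix_vector)

lemma inner_symmetric_matrix_vector_commute:
  fixes M :: "real^'n^'n"
  assumes "transpose M = M"
  shows "a \<bullet> (M *v b) = b \<bullet> (M *v a)"
  using inner_transpose_matrix_vector[of a M b] assms by (simp add: inner_commute)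

lemma quadratic_form_diff:
  fixes M :: "real^'n^'n"
  assumes "transpose M = M"
  shows "(a - b) \<bullet> (M *v (a - b)) = a \<bullet> (M *v a) - 2 * (a \<bullet> (M *v b)) + b \<bullet> (M *v b)"
  using inner_symmetric_matrix_vector_commute[OF assms, of b a]
  by (simp add: matrix_vector_mult_diff_distrib inner_diff_left inner_diff_right)

lemma pos_def_mat_quadratic_form_nonneg: "pos_def_mat M \<Longrightarrow> 0 \<le> v \<bullet> (M *v v)"
  unfolding pos_def_mat_def by (cases "v = 0") (auto intro: less_imp_le)

lemma pos_def_mat_quadratic_form_eq_0_iff: "pos_def_mat M \<Longrightarrow> v \<bullet> (M *v v) = 0 \<longleftrightarrow> v = 0"
  unfolding pos_def_mat_def by (metis inner_zero_left less_irrefl)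

lemma pos_def_mat_diagonal_pos:
  assumes "pos_def_mat M"
  shows "0 < M $ i $ i"
proof -
  have "0 < axis i (1::real) \<bullet> (M *v axis i 1)"
    using assms unfolding pos_def_mat_def by (simp add: axis_eq_0_iff)
  then show ?thesis by (simp add: inner_axis' matrix_vector_mult_axis_nth)
qed

lemma pos_def_mat_right_inverse:
  assumes "pos_def_mat M"
  shows "M ** matrix_inv M = mat 1"
proof -
  have "\<forall>x. M *v x = 0 \<longrightarrow> x = 0"
    using assms unfolding pos_def_mat_def by (metis inner_zero_right less_irrefl)
  then have "invertible M"
    using matrix_left_invertible_ker invertible_left_inverse by blast
  then show ?thesis
    unfolding invertible_def matrix_inv_def by (rule someI2_ex) blast
qed

lemma frechet_derivative_quadratic_form:
  fixes M :: "real^'n^'n"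
  assumes "transpose M = M"
  shows "frechet_derivative (\<lambda>x. x \<bullet> (M *v x)) (at x) h = 2 * ((M *v x) \<bullet> h)"
proof -
  have "((\<lambda>x. x \<bullet> (M *v x)) has_derivative (\<lambda>h. h \<bullet> (M *v x) + x \<bullet> (M *v h))) (at x)"
    by (auto intro!: derivative_eq_intros
        bounded_linear.has_derivative[OF matrix_vector_mul_bounded_linear])
  then have "frechet_derivative (\<lambda>x. x \<bullet> (M *v x)) (at x) = (\<lambda>h. h \<bullet> (M *v x) + x \<bullet> (M *v h))"
    by (rule frechet_derivative_at[symmetric])
  then show ?thesis
    using inner_symmetric_matrix_vector_commute[OF assms, of x h] by (simp add: inner_commute)
qed

lemma has_real_derivative_quadratic_form_matrix_path:
  fixes C :: "real \<Rightarrow> real^'n^'n"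
  assumes "(C has_vector_derivative D) F"
  shows "((\<lambda>s. x \<bullet> (C s *v x)) has_real_derivative x \<bullet> (D *v x)) F"
proof -
  have "linear (\<lambda>M::real^'n^'n. x \<bullet> (M *v x))"
    by (rule linearI)
      (simp_all add: matrix_vector_mult_add_rdistrib inner_add_right
        flip: scaleR_matrix_vector_assoc)
  then have "bounded_linear (\<lambda>M::real^'n^'n. x \<bullet> (M *v x))"
    using linear_conv_bounded_linear by blast
  from bounded_linear.has_vector_derivative[OF this assms] show ?thesis
    by (simp add: has_real_derivative_iff_has_vector_derivative)
qed

lemma real_linear_minus_square_completed:
  fixes m a y :: real
  assumes "m \<noteq> 0"
  shows "2 * a * y - a\<^sup>2 * m = y\<^sup>2 / m - m * (a - y / m)\<^sup>2"
  using assms by (simp add: power2_eq_square field_simps)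

lemma quadratic_form_diff_axis_completed_square:
  fixes M :: "real^'n^'n"
  assumes "transpose M = M" and "M $ i $ i \<noteq> 0"
  shows "x \<bullet> (M *v x) - (x - a *\<^sub>R axis i 1) \<bullet> (M *v (x - a *\<^sub>R axis i 1))
       = ((M *v x) $ i)\<^sup>2 / M $ i $ i - M $ i $ i * (a - (M *v x) $ i / M $ i $ i)\<^sup>2"
proof -
  have "x \<bullet> (M *v (a *\<^sub>R axis i 1)) = a * (M *v x) $ i"
    using inner_symmetric_matrix_vector_commute[OF assms(1), of x "axis i 1"]
    by (simp add: matrix_vector_mult_scaleR inner_axis')
  moreover have "(a *\<^sub>R axis i 1) \<bullet> (M *v (a *\<^sub>R axis i 1)) = a\<^sup>2 * M $ i $ i"
    by (simp add: matrix_vector_mult_scaleR inner_axis' matrix_vector_mult_axis_nth power2_eq_square)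
  ultimately have "x \<bullet> (M *v x) - (x - a *\<^sub>R axis i 1) \<bullet> (M *v (x - a *\<^sub>R axis i 1))
      = 2 * a * (M *v x) $ i - a\<^sup>2 * M $ i $ i"
    using quadratic_form_diff[OF assms(1), of x "a *\<^sub>R axis i 1"] by linarith
  also have "\<dots> = ((M *v x) $ i)\<^sup>2 / M $ i $ i - M $ i $ i * (a - (M *v x) $ i / M $ i $ i)\<^sup>2"
    using assms(2) by (rule real_linear_minus_square_completed)
  finally show ?thesis .
qed

lemma linear_quadratic_completed_square:
  fixes \<Lambda> :: "real^'n^'n" and y \<xi> :: "real^'n"
  assumes "pos_def_mat \<Lambda>"
  defines "z \<equiv> matrix_inv \<Lambda> *v y"
  shows "2 * (y \<bullet> \<xi>) - \<xi> \<bullet> (\<Lambda> *v \<xi>) = y \<bullet> z - (\<xi> - z) \<bullet> (\<Lambda> *v (\<xi> - z))"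
proof -
  have "\<Lambda> *v z = y"
    unfolding z_def by (simp add: matrix_vector_mul_assoc pos_def_mat_right_inverse[OF assms(1)])
  moreover have "transpose \<Lambda> = \<Lambda>"
    using assms(1) unfolding pos_def_mat_def by blast
  ultimately show ?thesis
    using quadratic_form_diff[of \<Lambda> \<xi> z] by (simp add: inner_commute)
qed

text \<open>\<open>2 (M x) \<bullet> \<xi>\<close> is the gradient term \<open>\<nabla>\<^sub>x (x \<bullet> M x) \<xi>\<close> for symmetric \<open>M\<close>.\<close>

definition hamiltonian ::
    "real^'n \<Rightarrow> real^'n^'n \<Rightarrow> real \<Rightarrow> real^'n^'n \<Rightarrow> real^'n^'n
     \<Rightarrow> real^'n \<Rightarrow> real^'n \<Rightarrow> real^'n \<Rightarrow> real" where
  "hamiltonian \<theta> \<Lambda> \<alpha> \<Sigma> M x \<xi> \<eta> =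
     (\<Sum>i\<in>UNIV. \<theta> $ i * (x \<bullet> (M *v x) - (x - \<eta> $ i *\<^sub>R axis i 1) \<bullet> (M *v (x - \<eta> $ i *\<^sub>R axis i 1))))
     + 2 * ((M *v x) \<bullet> \<xi>) - (\<xi> \<bullet> (\<Lambda> *v \<xi>) + \<alpha> * (x \<bullet> (\<Sigma> *v x)))"

definition hamiltonian_max ::
    "real^'n \<Rightarrow> real^'n^'n \<Rightarrow> real \<Rightarrow> real^'n^'n \<Rightarrow> real^'n^'n \<Rightarrow> real^'n \<Rightarrow> real" where
  "hamiltonian_max \<theta> \<Lambda> \<alpha> \<Sigma> M x =
     (\<Sum>i\<in>UNIV. \<theta> $ i * ((M *v x) $ i)\<^sup>2 / M $ i $ i)
     + (M *v x) \<bullet> (matrix_inv \<Lambda> *v (M *v x)) - \<alpha> * (x \<bullet> (\<Sigma> *v x))"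

definition optimal_drift :: "real^'n^'n \<Rightarrow> real^'n^'n \<Rightarrow> real^'n \<Rightarrow> real^'n" where
  "optimal_drift \<Lambda> M x = matrix_inv \<Lambda> *v (M *v x)"

definition optimal_jumps :: "real^'n^'n \<Rightarrow> real^'n \<Rightarrow> real^'n" where
  "optimal_jumps M x = diag_mat (\<lambda>i. 1 / M $ i $ i) *v (M *v x)"

lemma optimal_jumps_nth: "optimal_jumps M x $ i = (M *v x) $ i / M $ i $ i"
  by (simp add: optimal_jumps_def diag_mat_mult_vector_nth)

lemma hamiltonian_completed_square:
  assumes "pos_def_mat \<Lambda>" and "pos_def_mat M"
  shows "hamiltonian \<theta> \<Lambda> \<alpha> \<Sigma> M x \<xi> \<eta> = hamiltonian_max \<theta> \<Lambda> \<alpha> \<Sigma> M x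
           - (\<Sum>i\<in>UNIV. \<theta> $ i * (M $ i $ i * (\<eta> $ i - optimal_jumps M x $ i)\<^sup>2))
           - (\<xi> - optimal_drift \<Lambda> M x) \<bullet> (\<Lambda> *v (\<xi> - optimal_drift \<Lambda> M x))"
proof -
  have "transpose M = M"
    using assms(2) unfolding pos_def_mat_def by blast
  then have "\<theta> $ i * (x \<bullet> (M *v x) - (x - \<eta> $ i *\<^sub>R axis i 1) \<bullet> (M *v (x - \<eta> $ i *\<^sub>R axis i 1)))
      = \<theta> $ i * ((M *v x) $ i)\<^sup>2 / M $ i $ i
        - \<theta> $ i * (M $ i $ i * (\<eta> $ i - optimal_jumps M x $ i)\<^sup>2)" for i
    using quadratic_form_diff_axis_completed_square[of M i x "\<eta> $ i"]
      pos_def_mat_diagonal_pos[OF assms(2), of i]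
    unfolding optimal_jumps_nth by (simp add: right_diff_distrib)
  then have "(\<Sum>i\<in>UNIV. \<theta> $ i * (x \<bullet> (M *v x)
        - (x - \<eta> $ i *\<^sub>R axis i 1) \<bullet> (M *v (x - \<eta> $ i *\<^sub>R axis i 1))))
      = (\<Sum>i\<in>UNIV. \<theta> $ i * ((M *v x) $ i)\<^sup>2 / M $ i $ i)
        - (\<Sum>i\<in>UNIV. \<theta> $ i * (M $ i $ i * (\<eta> $ i - optimal_jumps M x $ i)\<^sup>2))"
    by (simp only: sum_subtractf)
  moreover have "2 * ((M *v x) \<bullet> \<xi>) - \<xi> \<bullet> (\<Lambda> *v \<xi>)
      = (M *v x) \<bullet> optimal_drift \<Lambda> M x
        - (\<xi> - optimal_drift \<Lambda> M x) \<bullet> (\<Lambda> *v (\<xi> - optimal_drift \<Lambda> M x))"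
    unfolding optimal_drift_def by (rule linear_quadratic_completed_square[OF assms(1)])
  ultimately show ?thesis
    unfolding hamiltonian_def hamiltonian_max_def optimal_drift_def by linarith
qed

context
  fixes \<theta> :: "real^'n" and \<Lambda> M :: "real^'n^'n"
  assumes theta_nonneg: "\<forall>i. \<theta> $ i \<ge> 0"
    and Lambda_pd: "pos_def_mat \<Lambda>" and M_pd: "pos_def_mat M"
begin

lemma jump_penalty_nonneg: "0 \<le> \<theta> $ i * (M $ i $ i * r\<^sup>2)"
  using theta_nonneg pos_def_mat_diagonal_pos[OF M_pd, of i] by simp

lemma hamiltonian_optimal:
  "hamiltonian \<theta> \<Lambda> \<alpha> \<Sigma> M x (optimal_drift \<Lambda> M x) (optimal_jumps M x)
     = hamiltonian_max \<theta> \<Lambda> \<alpha> \<Sigma> M x"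
  using hamiltonian_completed_square[OF Lambda_pd M_pd] by simp

lemma hamiltonian_le_max: "hamiltonian \<theta> \<Lambda> \<alpha> \<Sigma> M x \<xi> \<eta> \<le> hamiltonian_max \<theta> \<Lambda> \<alpha> \<Sigma> M x"
proof -
  have "0 \<le> (\<Sum>i\<in>UNIV. \<theta> $ i * (M $ i $ i * (\<eta> $ i - optimal_jumps M x $ i)\<^sup>2))"
    by (intro sum_nonneg jump_penalty_nonneg)
  moreover have "0 \<le> (\<xi> - optimal_drift \<Lambda> M x) \<bullet> (\<Lambda> *v (\<xi> - optimal_drift \<Lambda> M x))"
    by (rule pos_def_mat_quadratic_form_nonneg[OF Lambda_pd])
  ultimately show ?thesis
    using hamiltonian_completed_square[OF Lambda_pd M_pd, where \<theta>=\<theta> and \<alpha>=\<alpha> and \<Sigma>=\<Sigma>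
        and x=x and \<xi>=\<xi> and \<eta>=\<eta>]
    by linarith
qed

lemma hamiltonian_eq_max_iff:
  "hamiltonian \<theta> \<Lambda> \<alpha> \<Sigma> M x \<xi> \<eta> = hamiltonian_max \<theta> \<Lambda> \<alpha> \<Sigma> M x
     \<longleftrightarrow> \<xi> = optimal_drift \<Lambda> M x \<and> (\<forall>i. \<theta> $ i \<noteq> 0 \<longrightarrow> \<eta> $ i = optimal_jumps M x $ i)"
proof -
  let ?jump = "\<lambda>i. \<theta> $ i * (M $ i $ i * (\<eta> $ i - optimal_jumps M x $ i)\<^sup>2)"
  let ?drift = "(\<xi> - optimal_drift \<Lambda> M x) \<bullet> (\<Lambda> *v (\<xi> - optimal_drift \<Lambda> M x))"
  have "?jump i = 0 \<longleftrightarrow> (\<theta> $ i \<noteq> 0 \<longrightarrow> \<eta> $ i = optimal_jumps M x $ i)" for i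
    using pos_def_mat_diagonal_pos[OF M_pd, of i] by auto
  then have "(\<Sum>i\<in>UNIV. ?jump i) = 0 \<longleftrightarrow> (\<forall>i. \<theta> $ i \<noteq> 0 \<longrightarrow> \<eta> $ i = optimal_jumps M x $ i)"
    using jump_penalty_nonneg by (simp add: sum_nonneg_eq_0_iff)
  moreover have "?drift = 0 \<longleftrightarrow> \<xi> = optimal_drift \<Lambda> M x"
    using pos_def_mat_quadratic_form_eq_0_iff[OF Lambda_pd] by simp
  moreover have "(\<Sum>i\<in>UNIV. ?jump i) + ?drift = 0 \<longleftrightarrow> (\<Sum>i\<in>UNIV. ?jump i) = 0 \<and> ?drift = 0"
    using jump_penalty_nonneg pos_def_mat_quadratic_form_nonneg[OF Lambda_pd]
    by (intro add_nonneg_eq_0_iff sum_nonneg)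
  moreover have "hamiltonian \<theta> \<Lambda> \<alpha> \<Sigma> M x \<xi> \<eta> = hamiltonian_max \<theta> \<Lambda> \<alpha> \<Sigma> M x
      \<longleftrightarrow> (\<Sum>i\<in>UNIV. ?jump i) + ?drift = 0"
    using hamiltonian_completed_square[OF Lambda_pd M_pd, where \<theta>=\<theta> and \<alpha>=\<alpha> and \<Sigma>=\<Sigma>
        and x=x and \<xi>=\<xi> and \<eta>=\<eta>]
    by linarith
  ultimately show ?thesis by blast
qed

lemma SUP_hamiltonian:
  "(SUP p\<in>UNIV. hamiltonian \<theta> \<Lambda> \<alpha> \<Sigma> M x (fst p) (snd p)) = hamiltonian_max \<theta> \<Lambda> \<alpha> \<Sigma> M x"
  by (rule cSup_eq_maximum)
    (use hamiltonian_optimal hamiltonian_le_max in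
      \<open>auto intro!: image_eqI[where x="(optimal_drift \<Lambda> M x, optimal_jumps M x)"]\<close>)

end

lemma inner_congruence_matrix_vector:
  "x \<bullet> ((transpose M ** A ** M) *v x) = (M *v x) \<bullet> (A *v (M *v (x::real^'n)))"
proof -
  have "(transpose M ** A ** M) *v x = transpose M *v (A *v (M *v x))"
    by (simp add: matrix_mul_assoc matrix_vector_mul_assoc)
  then show ?thesis
    by (simp only: inner_transpose_matrix_vector)
qed

lemma riccati_rhs_quadratic_form:
  "x \<bullet> ((transpose M ** matrix_inv \<Lambda> ** M + transpose M ** diag_mat (\<lambda>i. \<theta> $ i / M $ i $ i) ** M
          - \<alpha> *\<^sub>R \<Sigma>) *v x) = hamiltonian_max \<theta> \<Lambda> \<alpha> \<Sigma> M x"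
proof -
  have "(M *v x) \<bullet> (diag_mat (\<lambda>i. \<theta> $ i / M $ i $ i) *v (M *v x))
      = (\<Sum>i\<in>UNIV. \<theta> $ i * ((M *v x) $ i)\<^sup>2 / M $ i $ i)"
    by (simp add: inner_vec_def diag_mat_mult_vector_nth power2_eq_square mult_ac)
  then show ?thesis
    unfolding hamiltonian_max_def
    by (simp add: matrix_vector_mult_add_rdistrib matrix_vector_mult_diff_rdistrib
        inner_add_right inner_diff_right inner_congruence_matrix_vector
        flip: scaleR_matrix_vector_assoc)
qed

theorem proposition2p5:
  fixes T \<alpha> l :: real
    and \<Lambda> \<Sigma> :: "real^'n^'n"
    and \<theta> :: "real^'n"
    and C :: "real \<Rightarrow> real \<Rightarrow> real^'n^'n"
    and f :: "real^'n \<Rightarrow> real^'n \<Rightarrow> real"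
    and w :: "real \<Rightarrow> real \<Rightarrow> real^'n \<Rightarrow> real"
    and H :: "real \<Rightarrow> real^'n \<Rightarrow> real^'n \<Rightarrow> real^'n \<Rightarrow> real"
  assumes T_pos: "T > 0" and alpha_nonneg: "\<alpha> \<ge> 0" and l_pos: "l > 0"
    and Lambda_pd: "pos_def_mat \<Lambda>"
    and Sigma_nnd: "nonneg_def_mat \<Sigma>"
    and theta_nonneg: "\<forall>i. \<theta> $ i \<ge> 0"
    and f_def: "\<forall>\<xi> x. f \<xi> x = \<xi> \<bullet> (\<Lambda> *v \<xi>) + \<alpha> * (x \<bullet> (\<Sigma> *v x))"
    and C_pd: "\<forall>t\<in>{0..T}. pos_def_mat (C l t)"
    and C_ode: "\<forall>t\<in>{0..T}. (C l has_vector_derivative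
        (transpose (C l t) ** matrix_inv \<Lambda> ** C l t
         + transpose (C l t) ** diag_mat (\<lambda>i. \<theta> $ i / (C l t $ i $ i)) ** C l t
         - \<alpha> *\<^sub>R \<Sigma>)) (at t within {0..T})"
    and C_T: "C l T = l *\<^sub>R mat 1"
    and w_def: "\<forall>t x. w l t x = x \<bullet> (C l t *v x)"
    and H_def: "\<forall>t x \<xi> \<eta>. H t x \<xi> \<eta> =
        (\<Sum>i\<in>UNIV. \<theta> $ i * (w l t x - w l t (x - (\<eta> $ i) *\<^sub>R axis i 1)))
        + frechet_derivative (w l t) (at x) \<xi> - f \<xi> x"
  shows "(\<forall>t\<in>{0..T}. \<forall>x.
            ((\<lambda>s. w l s x) has_real_derivative (SUP p\<in>UNIV. H t x (fst p) (snd p))) (at t within {0..T})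
          \<and> (\<forall>\<xi> \<eta>. H t x \<xi> \<eta> \<le> H t x (matrix_inv \<Lambda> *v (C l t *v x))
                                  (diag_mat (\<lambda>i. 1 / (C l t $ i $ i)) *v (C l t *v x)))
          \<and> (\<forall>\<xi> \<eta>. H t x \<xi> \<eta> = H t x (matrix_inv \<Lambda> *v (C l t *v x))
                                  (diag_mat (\<lambda>i. 1 / (C l t $ i $ i)) *v (C l t *v x))
                \<longleftrightarrow> (\<xi> = matrix_inv \<Lambda> *v (C l t *v x)
                     \<and> (\<forall>i. \<theta> $ i \<noteq> 0 \<longrightarrow>
                          \<eta> $ i = (diag_mat (\<lambda>i. 1 / (C l t $ i $ i)) *v (C l t *v x)) $ i))))
         \<and> (\<forall>x. w l T x = l * (x \<bullet> x))"
proof (intro conjI ballI allI)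
  fix t x assume t: "t \<in> {0..T}"
  have Ct_pd: "pos_def_mat (C l t)"
    using C_pd t by blast
  have w_t: "w l t = (\<lambda>x. x \<bullet> (C l t *v x))"
    using w_def by blast
  have "H t x \<xi> \<eta> = hamiltonian \<theta> \<Lambda> \<alpha> \<Sigma> (C l t) x \<xi> \<eta>" for \<xi> \<eta>
    using H_def[rule_format, of t x \<xi> \<eta>] f_def Ct_pd frechet_derivative_quadratic_form[of "C l t" x \<xi>]
    unfolding w_t hamiltonian_def pos_def_mat_def by simp
  then have H_eq: "H t x = hamiltonian \<theta> \<Lambda> \<alpha> \<Sigma> (C l t) x"
    by blast
  have optimal: "matrix_inv \<Lambda> *v (C l t *v x) = optimal_drift \<Lambda> (C l t) x"
    "diag_mat (\<lambda>i. 1 / (C l t $ i $ i)) *v (C l t *v x) = optimal_jumps (C l t) x"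
    by (simp_all add: optimal_drift_def optimal_jumps_def)
  have "((\<lambda>s. w l s x) has_real_derivative hamiltonian_max \<theta> \<Lambda> \<alpha> \<Sigma> (C l t) x) (at t within {0..T})"
    using has_real_derivative_quadratic_form_matrix_path[OF C_ode[rule_format, OF t]] w_def
    by (simp add: riccati_rhs_quadratic_form)
  then show "((\<lambda>s. w l s x) has_real_derivative (SUP p\<in>UNIV. H t x (fst p) (snd p))) (at t within {0..T})"
    unfolding H_eq SUP_hamiltonian[OF theta_nonneg Lambda_pd Ct_pd] .
  show "H t x \<xi> \<eta> \<le> H t x (matrix_inv \<Lambda> *v (C l t *v x)) (diag_mat (\<lambda>i. 1 / (C l t $ i $ i)) *v (C l t *v x))"
    for \<xi> \<eta>
    unfolding H_eq optimal hamiltonian_optimal[OF theta_nonneg Lambda_pd Ct_pd]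
    by (rule hamiltonian_le_max[OF theta_nonneg Lambda_pd Ct_pd])
  show "H t x \<xi> \<eta> = H t x (matrix_inv \<Lambda> *v (C l t *v x)) (diag_mat (\<lambda>i. 1 / (C l t $ i $ i)) *v (C l t *v x))
      \<longleftrightarrow> \<xi> = matrix_inv \<Lambda> *v (C l t *v x)
          \<and> (\<forall>i. \<theta> $ i \<noteq> 0 \<longrightarrow> \<eta> $ i = (diag_mat (\<lambda>i. 1 / (C l t $ i $ i)) *v (C l t *v x)) $ i)"
    for \<xi> \<eta>
    unfolding H_eq optimal hamiltonian_optimal[OF theta_nonneg Lambda_pd Ct_pd]
    by (rule hamiltonian_eq_max_iff[OF theta_nonneg Lambda_pd Ct_pd])
next
  show "w l T x = l * (x \<bullet> x)" for x
    using w_def C_T by (simp flip: scaleR_matrix_vector_assoc)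
qed

end
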